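(* Let $\alpha>0$ be irrational. Suppose there are sequences of positive integers $(p_n)_{n\ge1},(q_n)_{n\ge1}$ with $q_1<q_2<\cdots$ and a constant $K>0$ such that $|\alpha q_n-p_n|\le K/q_n$ for all $n$, and such that both sequences $(p_n)$ and $(q_n)$ are evenly divisible (respectively, strongly evenly divisible). Then for every $\varepsilon>0$ there is $C>0$ with $\delta_{\min}^{(\alpha)}(N)\le C N^{-1+\varepsilon}$ for infinitely many $N$ (respectively, there is $C>0$ with $\delta_{\min}^{(\alpha)}(N)\le C N^{-1}$ for infinitely many $N$). If in addition there is a constant $c>0$ with $q_n\ge c\,q_{n+1}$ for all $n$, then these inequalities hold for all $N\ge 2$.
   Context: For irrational $\alpha>0$, the numbers $\alpha m^2+n^2$ with integers $m,n\ge 1$ are pairwise distinct; list them in increasing order as $0<\lambda_1<\lambda_2<\cdots$. For $N\ge 2$ define $\delta_{\min}^{(\alpha)}(N)=\min\{\lambda_{i+1}-\lambda_i : 1\le i<N\}$. A sequence of positive integers $(a_n)$ is called evenly divisible if for every $\varepsilon>0$ there is $c_\varepsilon>0$ such that each $a_n$ has a divisor $d\mid a_n$ with $\min(d,a_n/d)\ge c_\varepsilon a_n^{1/2-\varepsilon}$; it is called strongly evenly divisible if there is $c>0$ such that each $a_n$ has a divisor $d\mid a_n$ with $\min(d,a_n/d)\ge c\,a_n^{1/2}$. *)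

theory Defs
  imports Complex_Main
begin

definition spec_set :: "real \<Rightarrow> real set" where
  "spec_set \<alpha> = {\<alpha> * real m ^ 2 + real n ^ 2 | m n :: nat. m \<ge> 1 \<and> n \<ge> 1}"

text \<open>lam alpha i is the i-th smallest element (1-indexed): the unique element
  of the set having exactly i - 1 elements of the set strictly below it.\<close>
definition lam :: "real \<Rightarrow> nat \<Rightarrow> real" where
  "lam \<alpha> i = (THE x. x \<in> spec_set \<alpha> \<and> card {y \<in> spec_set \<alpha>. y < x} = i - 1)"

definition delta_min :: "real \<Rightarrow> nat \<Rightarrow> real" where
  "delta_min \<alpha> N = Min {lam \<alpha> (i + 1) - lam \<alpha> i | i. 1 \<le> i \<and> i < N}"

text \<open>Sequences are indexed from 1; only indices n >= 1 matter.\<close>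
definition evenly_divisible :: "(nat \<Rightarrow> nat) \<Rightarrow> bool" where
  "evenly_divisible a \<longleftrightarrow>
     (\<forall>\<epsilon>>0. \<exists>c>0. \<forall>n\<ge>1. \<exists>d. d dvd a n \<and>
        real (min d (a n div d)) \<ge> c * real (a n) powr (1/2 - \<epsilon>))"

definition strongly_evenly_divisible :: "(nat \<Rightarrow> nat) \<Rightarrow> bool" where
  "strongly_evenly_divisible a \<longleftrightarrow>
     (\<exists>c>0. \<forall>n\<ge>1. \<exists>d. d dvd a n \<and>
        real (min d (a n div d)) \<ge> c * real (a n) powr (1/2))"

end

theory Submission
  imports Defs
begin

text \<open>Factor \<open>q\<^sub>n = s t\<close> and \<open>p\<^sub>n = u v\<close> into nearly balanced factors. Two explicit
  lattice points then give values \<open>\<alpha> m\<^sup>2 + n\<^sup>2 = O(q\<^sub>n\<^sup>1\<^sup>+\<^sup>\<epsilon>)\<close> that differ by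
  \<open>16 \<bar>p\<^sub>n - \<alpha> q\<^sub>n\<bar> = O(1/q\<^sub>n)\<close>. Since at most \<open>X/\<surd>\<alpha>\<close> values lie below \<open>X\<close>, the first
  \<open>N = O(q\<^sub>n\<^sup>1\<^sup>+\<^sup>\<epsilon>)\<close> values contain a gap \<open>O(1/q\<^sub>n) = O(N\<^sup>-\<^sup>1\<^sup>+\<^sup>\<epsilon>)\<close>, and these \<open>N\<close> tend to
  infinity with \<open>n\<close>. If moreover \<open>q\<^sub>n\<^sub>+\<^sub>1 = O(q\<^sub>n)\<close>, every large \<open>N\<close> exceeds one of these ranks by
  at most a bounded factor, and \<open>\<delta>\<^sub>m\<^sub>i\<^sub>n\<close> is nonincreasing in \<open>N\<close>.\<close>

definition spec_count :: "real \<Rightarrow> real \<Rightarrow> nat" where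
  "spec_count \<alpha> X = card {y \<in> spec_set \<alpha>. y \<le> X}"

definition balanced_divisor :: "real \<Rightarrow> real \<Rightarrow> nat \<Rightarrow> bool" where
  "balanced_divisor c \<eta> a \<longleftrightarrow> (\<exists>d. d dvd a \<and> real (min d (a div d)) \<ge> c * real a powr (1/2 - \<eta>))"

lemma evenly_divisible_iff_balanced_divisor:
  "evenly_divisible a \<longleftrightarrow> (\<forall>\<epsilon>>0. \<exists>c>0. \<forall>n\<ge>1. balanced_divisor c \<epsilon> (a n))"
  unfolding evenly_divisible_def balanced_divisor_def ..

lemma strongly_evenly_divisible_iff_balanced_divisor:
  "strongly_evenly_divisible a \<longleftrightarrow> (\<exists>c>0. \<forall>n\<ge>1. balanced_divisor c 0 (a n))"
  unfolding strongly_evenly_divisible_def balanced_divisor_def by simp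

lemma spec_set_memI: "1 \<le> m \<Longrightarrow> 1 \<le> n \<Longrightarrow> \<alpha> * real m ^ 2 + real n ^ 2 \<in> spec_set \<alpha>"
  unfolding spec_set_def by blast

lemma spec_set_nonneg: "\<alpha> > 0 \<Longrightarrow> y \<in> spec_set \<alpha> \<Longrightarrow> y \<ge> 0"
  unfolding spec_set_def by auto

lemma spec_set_le_subset:
  assumes "\<alpha> > 0" "X \<ge> 0"
  shows "{y \<in> spec_set \<alpha>. y \<le> X} \<subseteq>
    (\<lambda>(m, n). \<alpha> * real m ^ 2 + real n ^ 2) ` ({1..nat \<lfloor>sqrt (X / \<alpha>)\<rfloor>} \<times> {1..nat \<lfloor>sqrt X\<rfloor>})"
proof
  fix y assume "y \<in> {y \<in> spec_set \<alpha>. y \<le> X}"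
  then obtain m n :: nat where y: "y = \<alpha> * real m ^ 2 + real n ^ 2" "m \<ge> 1" "n \<ge> 1" "y \<le> X"
    unfolding spec_set_def by auto
  have "0 \<le> \<alpha> * real m ^ 2" using assms by simp
  then have "\<alpha> * real m ^ 2 \<le> X" "real n ^ 2 \<le> X"
    using y zero_le_power2[of "real n"] by linarith+
  then have "real m ^ 2 \<le> X / \<alpha>"
    using assms by (simp add: field_simps)
  then have "m \<le> nat \<lfloor>sqrt (X / \<alpha>)\<rfloor>"
    by (simp add: le_nat_floor real_le_rsqrt)
  moreover have "n \<le> nat \<lfloor>sqrt X\<rfloor>"
    using \<open>real n ^ 2 \<le> X\<close> by (simp add: le_nat_floor real_le_rsqrt)
  ultimately show "y \<in> (\<lambda>(m, n). \<alpha> * real m ^ 2 + real n ^ 2) ` ({1..nat \<lfloor>sqrt (X / \<alpha>)\<rfloor>} \<times> {1..nat \<lfloor>sqrt X\<rfloor>})"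
    using y by force
qed

lemma finite_spec_set_le:
  assumes "\<alpha> > 0"
  shows "finite {y \<in> spec_set \<alpha>. y \<le> X}"
proof (cases "X \<ge> 0")
  case True
  show ?thesis by (rule finite_subset[OF spec_set_le_subset[OF assms True]]) auto
next
  case False
  then have "{y \<in> spec_set \<alpha>. y \<le> X} = {}"
    using spec_set_nonneg[OF assms] by force
  then show ?thesis by (metis finite.emptyI)
qed

lemma finite_spec_set_less: "\<alpha> > 0 \<Longrightarrow> finite {y \<in> spec_set \<alpha>. y < X}"
  by (rule finite_subset[OF _ finite_spec_set_le[of \<alpha> X]]) auto

lemma spec_count_le:
  assumes "\<alpha> > 0" "X \<ge> 0"
  shows "real (spec_count \<alpha> X) \<le> X / sqrt \<alpha>"
proof -
  let ?a = "nat \<lfloor>sqrt (X / \<alpha>)\<rfloor>" and ?b = "nat \<lfloor>sqrt X\<rfloor>"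
  have "spec_count \<alpha> X \<le> card ((\<lambda>(m, n). \<alpha> * real m ^ 2 + real n ^ 2) ` ({1..?a} \<times> {1..?b}))"
    unfolding spec_count_def by (rule card_mono[OF _ spec_set_le_subset[OF assms]]) auto
  also have "\<dots> \<le> ?a * ?b"
    using card_image_le[of "{1..?a} \<times> {1..?b}"] by (simp add: card_cartesian_product)
  finally have "real (spec_count \<alpha> X) \<le> real ?a * real ?b"
    by (metis of_nat_le_iff of_nat_mult)
  also have "\<dots> \<le> sqrt (X / \<alpha>) * sqrt X"
    using assms by (intro mult_mono) simp_all
  also have "\<dots> = X / sqrt \<alpha>"
    using assms by (simp add: real_sqrt_divide)
  finally show ?thesis .
qed

text \<open>The values \<open>\<alpha> + k\<^sup>2\<close>, \<open>1 \<le> k \<le> M\<close>, are \<open>M\<close> distinct elements below \<open>X\<close>.\<close>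
lemma spec_count_ge:
  assumes "\<alpha> > 0" "\<alpha> + real M ^ 2 \<le> X"
  shows "M \<le> spec_count \<alpha> X"
proof -
  let ?f = "\<lambda>k::nat. \<alpha> * real (1::nat) ^ 2 + real k ^ 2"
  have "?f ` {1..M} \<subseteq> {y \<in> spec_set \<alpha>. y \<le> X}"
  proof
    fix y assume "y \<in> ?f ` {1..M}"
    then obtain k where k: "k \<in> {1..M}" "y = ?f k" by auto
    have "real k ^ 2 \<le> real M ^ 2" using k by (simp add: power_mono)
    moreover have "y = \<alpha> + real k ^ 2" using k by simp
    ultimately have "y \<le> X" using assms by linarith
    moreover have "y \<in> spec_set \<alpha>"
      using k spec_set_memI[of 1 k \<alpha>] by simp
    ultimately show "y \<in> {y \<in> spec_set \<alpha>. y \<le> X}" by simp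
  qed
  then have "card (?f ` {1..M}) \<le> spec_count \<alpha> X"
    unfolding spec_count_def by (rule card_mono[OF finite_spec_set_le[OF assms(1)]])
  moreover have "inj_on ?f {1..M}" by (rule inj_onI) simp
  ultimately show ?thesis by (simp add: card_image)
qed

lemma card_spec_set_less_strict_mono:
  assumes "\<alpha> > 0" "x \<in> spec_set \<alpha>" "x < x'"
  shows "card {y \<in> spec_set \<alpha>. y < x} < card {y \<in> spec_set \<alpha>. y < x'}"
  by (rule psubset_card_mono[OF finite_spec_set_less]) (use assms in auto)

lemma spec_count_eq_Suc_card_less:
  assumes "\<alpha> > 0" "x \<in> spec_set \<alpha>"
  shows "spec_count \<alpha> x = Suc (card {y \<in> spec_set \<alpha>. y < x})"
proof -
  have "{y \<in> spec_set \<alpha>. y \<le> x} = insert x {y \<in> spec_set \<alpha>. y < x}"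
    using assms by auto
  then show ?thesis
    unfolding spec_count_def using finite_spec_set_less[OF assms(1)] by simp
qed

lemma lam_spec_count:
  assumes "\<alpha> > 0" "x \<in> spec_set \<alpha>"
  shows "lam \<alpha> (spec_count \<alpha> x) = x"
  unfolding lam_def spec_count_eq_Suc_card_less[OF assms]
proof (rule the_equality)
  fix z assume z: "z \<in> spec_set \<alpha> \<and> card {y \<in> spec_set \<alpha>. y < z} = Suc (card {y \<in> spec_set \<alpha>. y < x}) - 1"
  show "z = x"
  proof (rule ccontr)
    assume "z \<noteq> x"
    then consider "z < x" | "x < z" by linarith
    then show False
      using card_spec_set_less_strict_mono[OF assms(1)] assms(2) z by cases fastforce+
  qed
qed (use assms in simp)

lemma spec_count_successor:
  assumes "\<alpha> > 0" "A \<in> spec_set \<alpha>" "B \<in> spec_set \<alpha>" "A < B"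
  obtains x where "x \<in> spec_set \<alpha>" "A < x" "x \<le> B" "spec_count \<alpha> x = Suc (spec_count \<alpha> A)"
proof -
  define T where "T = {y \<in> spec_set \<alpha>. A < y \<and> y \<le> B}"
  have "finite T"
    unfolding T_def by (rule finite_subset[OF _ finite_spec_set_le[OF assms(1), of B]]) auto
  moreover have "B \<in> T" using assms unfolding T_def by auto
  ultimately have x: "Min T \<in> T" "\<And>y. y \<in> T \<Longrightarrow> Min T \<le> y"
    using Min_in by auto
  have "{y \<in> spec_set \<alpha>. y \<le> Min T} = insert (Min T) {y \<in> spec_set \<alpha>. y \<le> A}"
  proof (intro equalityI subsetI)
    fix y assume y: "y \<in> {y \<in> spec_set \<alpha>. y \<le> Min T}"
    show "y \<in> insert (Min T) {y \<in> spec_set \<alpha>. y \<le> A}"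
    proof (cases "A < y")
      case True
      then have "y \<in> T" using y x(1) unfolding T_def by auto
      then show ?thesis using x(2) y by (simp add: order_antisym)
    qed (use y in auto)
  qed (use x(1) assms(2) in \<open>auto simp: T_def\<close>)
  then have "spec_count \<alpha> (Min T) = Suc (spec_count \<alpha> A)"
    unfolding spec_count_def using x(1) finite_spec_set_le[OF assms(1)]
    by (simp add: T_def)
  then show ?thesis using that x(1) unfolding T_def by blast
qed

lemma delta_min_le:
  assumes "1 \<le> i" "i < N"
  shows "delta_min \<alpha> N \<le> lam \<alpha> (i + 1) - lam \<alpha> i"
  unfolding delta_min_def by (rule Min_le) (use assms in auto)

lemma delta_min_antimono:
  assumes "2 \<le> N" "N \<le> M"
  shows "delta_min \<alpha> M \<le> delta_min \<alpha> N"
  unfolding delta_min_def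
proof (rule Min_antimono)
  show "{lam \<alpha> (i + 1) - lam \<alpha> i |i. 1 \<le> i \<and> i < N} \<subseteq> {lam \<alpha> (i + 1) - lam \<alpha> i |i. 1 \<le> i \<and> i < M}"
    using assms by fastforce
  show "{lam \<alpha> (i + 1) - lam \<alpha> i |i. 1 \<le> i \<and> i < N} \<noteq> {}"
    using assms by (auto intro!: exI[of _ 1])
qed auto

lemma delta_min_spec_count_le:
  assumes "\<alpha> > 0" "A \<in> spec_set \<alpha>" "B \<in> spec_set \<alpha>" "A < B"
  shows "2 \<le> spec_count \<alpha> B" "delta_min \<alpha> (spec_count \<alpha> B) \<le> B - A"
proof -
  obtain x where x: "x \<in> spec_set \<alpha>" "A < x" "x \<le> B" and Sx: "spec_count \<alpha> x = Suc (spec_count \<alpha> A)"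
    using spec_count_successor[OF assms] .
  have "1 \<le> spec_count \<alpha> A"
    using spec_count_eq_Suc_card_less[OF assms(1,2)] by simp
  moreover have "spec_count \<alpha> x \<le> spec_count \<alpha> B"
    unfolding spec_count_def by (rule card_mono[OF finite_spec_set_le[OF assms(1)]]) (use x in auto)
  ultimately have i: "1 \<le> spec_count \<alpha> A" "spec_count \<alpha> A < spec_count \<alpha> B"
    using Sx by simp_all
  then show "2 \<le> spec_count \<alpha> B" by simp
  have "delta_min \<alpha> (spec_count \<alpha> B) \<le> lam \<alpha> (spec_count \<alpha> A + 1) - lam \<alpha> (spec_count \<alpha> A)"
    using delta_min_le[OF i] .
  also have "\<dots> = x - A"
    using Sx lam_spec_count[OF assms(1)] x(1) assms(2) by (metis Suc_eq_plus1)
  finally show "delta_min \<alpha> (spec_count \<alpha> B) \<le> B - A" using x by simp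
qed

lemma power2_four_mult_plus_minus_le:
  fixes a b :: real
  assumes "0 \<le> a" "a \<le> b"
  shows "(4 * b + a) ^ 2 \<le> 25 * b ^ 2" "(4 * b - a) ^ 2 \<le> 25 * b ^ 2"
proof -
  have "(4 * b + a) ^ 2 \<le> (5 * b) ^ 2" "(4 * b - a) ^ 2 \<le> (5 * b) ^ 2"
    using assms by (intro power_mono; simp)+
  then show "(4 * b + a) ^ 2 \<le> 25 * b ^ 2" "(4 * b - a) ^ 2 \<le> 25 * b ^ 2"
    by (simp_all add: power_mult_distrib)
qed

text \<open>With \<open>Q = s t\<close> and \<open>P = u v\<close>, the points \<open>(s + 4t, 4v - u)\<close> and \<open>(4t - s, u + 4v)\<close>
  give \<open>\<alpha> m\<^sup>2 + n\<^sup>2\<close>-values differing by exactly \<open>16 (P - \<alpha> Q)\<close>.\<close>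
lemma close_pair_in_spec_set:
  assumes "\<alpha> > 0" "\<alpha> \<notin> \<rat>"
    and st: "s * t = Q" "1 \<le> s" "s \<le> t"
    and uv: "u * v = P" "1 \<le> u" "u \<le> v"
  obtains A B where "A \<in> spec_set \<alpha>" "B \<in> spec_set \<alpha>" "A < B"
    "B - A = 16 * \<bar>\<alpha> * real Q - real P\<bar>" "\<alpha> * real Q \<le> B" "B \<le> 25 * (\<alpha> * real t ^ 2 + real v ^ 2)"
proof -
  define A0 where "A0 = \<alpha> * real (s + 4 * t) ^ 2 + real (4 * v - u) ^ 2"
  define B0 where "B0 = \<alpha> * real (4 * t - s) ^ 2 + real (u + 4 * v) ^ 2"
  have r: "real (4 * t - s) = 4 * real t - real s" "real (4 * v - u) = 4 * real v - real u"
    using st uv by simp_all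
  have rs: "1 \<le> real s" "real s \<le> real t" "1 \<le> real u" "real u \<le> real v"
    using st uv by simp_all
  have rQ: "real Q = real s * real t" and rP: "real P = real u * real v"
    using st(1) uv(1) by (metis of_nat_mult)+
  have in_spec: "A0 \<in> spec_set \<alpha>" "B0 \<in> spec_set \<alpha>"
    unfolding A0_def B0_def by (rule spec_set_memI; use st uv in simp)+
  have diff: "B0 - A0 = 16 * (real P - \<alpha> * real Q)"
    unfolding A0_def B0_def r rQ rP by (simp add: power2_eq_square algebra_simps)
  have "B0 \<noteq> A0"
  proof
    assume "B0 = A0"
    moreover have "real Q > 0" using rQ rs by simp
    ultimately have "\<alpha> = real P / real Q"
      using diff by (simp add: field_simps)
    then show False using assms(2) by simp
  qed
  have "\<alpha> * real Q \<le> \<alpha> * real (s + 4 * t) ^ 2"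
    using assms(1) rs unfolding rQ by (intro mult_left_mono) (simp_all add: power2_eq_square algebra_simps)
  then have lower: "\<alpha> * real Q \<le> A0" unfolding A0_def using zero_le_power2 add_increasing2 by blast
  have b: "real (s + 4 * t) ^ 2 \<le> 25 * real t ^ 2" "real (4 * t - s) ^ 2 \<le> 25 * real t ^ 2"
    "real (4 * v - u) ^ 2 \<le> 25 * real v ^ 2" "real (u + 4 * v) ^ 2 \<le> 25 * real v ^ 2"
    using power2_four_mult_plus_minus_le[of "real s" "real t"] power2_four_mult_plus_minus_le[of "real u" "real v"]
    unfolding r using rs by (simp_all add: add.commute)
  then have upper: "A0 \<le> 25 * (\<alpha> * real t ^ 2 + real v ^ 2)" "B0 \<le> 25 * (\<alpha> * real t ^ 2 + real v ^ 2)"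
    unfolding A0_def B0_def
    using add_mono[OF mult_left_mono[OF b(1)] b(3)] add_mono[OF mult_left_mono[OF b(2)] b(4)] assms(1)
    by (simp_all add: algebra_simps)
  show ?thesis
  proof (rule that[of "min A0 B0" "max A0 B0"])
    show "max A0 B0 - min A0 B0 = 16 * \<bar>\<alpha> * real Q - real P\<bar>"
      using diff by (simp add: abs_if)
  qed (use in_spec \<open>B0 \<noteq> A0\<close> lower upper in \<open>auto simp: min_def max_def\<close>)
qed

lemma balanced_divisor_factorization:
  assumes "balanced_divisor c \<eta> Q" "Q > 0" "c > 0"
  obtains s t where "s * t = Q" "1 \<le> s" "s \<le> t" "real t ^ 2 \<le> real Q powr (1 + 2 * \<eta>) / c ^ 2"
proof -
  obtain d where d: "d dvd Q" and hd: "real (min d (Q div d)) \<ge> c * real Q powr (1/2 - \<eta>)"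
    using assms(1) unfolding balanced_divisor_def by blast
  define s where "s = min d (Q div d)"
  define t where "t = max d (Q div d)"
  have st: "s * t = Q"
    using d unfolding s_def t_def by (cases "d \<le> Q div d") (auto simp: mult.commute)
  have Qpos: "real Q > 0" using assms(2) by simp
  have cQ: "c * real Q powr (1/2 - \<eta>) > 0" using assms(3) Qpos by simp
  have s: "real s \<ge> c * real Q powr (1/2 - \<eta>)" using hd unfolding s_def .
  then have "real s > 0" using cQ by linarith
  have "real t = real Q / real s"
    using st \<open>real s > 0\<close> by (metis nonzero_mult_div_cancel_left of_nat_mult less_irrefl)
  also have "\<dots> \<le> real Q / (c * real Q powr (1/2 - \<eta>))"
    using s cQ Qpos by (intro divide_left_mono) auto
  also have "\<dots> = real Q powr (1/2 + \<eta>) / c"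
    using assms(3) Qpos by (simp add: field_simps powr_add[symmetric])
  finally have "real t ^ 2 \<le> (real Q powr (1/2 + \<eta>) / c) ^ 2"
    by (rule power_mono) simp
  also have "\<dots> = real Q powr (1 + 2 * \<eta>) / c ^ 2"
    using Qpos by (simp add: power_divide power2_eq_square powr_add[symmetric])
  finally show ?thesis
    using that st \<open>real s > 0\<close> unfolding s_def t_def by auto
qed

lemma numerator_le_of_approximation:
  assumes "Q > 0" "\<bar>\<alpha> * real Q - real P\<bar> \<le> K / real Q"
  shows "real P \<le> (\<alpha> + K) * real Q"
proof -
  have "0 \<le> K / real Q" using assms(2) abs_ge_zero order_trans by blast
  then have "K \<ge> 0" using assms(1) by (simp add: zero_le_divide_iff)
  then have "K / real Q \<le> K" "K \<le> K * real Q"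
    using assms(1) by (simp_all add: divide_le_eq mult_le_cancel_left1)
  then show ?thesis using assms(2) by (simp add: algebra_simps)
qed

lemma numerator_powr_le_of_approximation:
  assumes "P > 0" "Q > 0" "\<bar>\<alpha> * real Q - real P\<bar> \<le> K / real Q" "0 \<le> \<epsilon>"
  shows "real P powr (1 + \<epsilon>) \<le> (\<alpha> + K) powr (1 + \<epsilon>) * real Q powr (1 + \<epsilon>)"
proof -
  have P: "real P \<le> (\<alpha> + K) * real Q"
    using numerator_le_of_approximation[OF assms(2,3)] .
  then have "0 < (\<alpha> + K) * real Q"
    using assms(1) by (metis of_nat_0_less_iff order_less_le_trans)
  then have "\<alpha> + K > 0" using assms(2) by (simp add: zero_less_mult_iff)
  have "real P powr (1 + \<epsilon>) \<le> ((\<alpha> + K) * real Q) powr (1 + \<epsilon>)"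
    using P assms(4) by (intro powr_mono2) auto
  also have "\<dots> = (\<alpha> + K) powr (1 + \<epsilon>) * real Q powr (1 + \<epsilon>)"
    using \<open>\<alpha> + K > 0\<close> by (simp add: powr_mult)
  finally show ?thesis .
qed

lemma small_gap_of_approximation:
  fixes \<alpha> K \<epsilon> c1 c2 :: real and P Q :: nat
  defines "C0 \<equiv> 25 * (\<alpha> / c1 ^ 2 + (\<alpha> + K) powr (1 + \<epsilon>) / c2 ^ 2) / sqrt \<alpha>"
  assumes "\<alpha> > 0" "\<alpha> \<notin> \<rat>" "0 \<le> \<epsilon>" "c1 > 0" "c2 > 0" "P > 0" "Q > 0"
    and approx: "\<bar>\<alpha> * real Q - real P\<bar> \<le> K / real Q"
    and "balanced_divisor c1 (\<epsilon>/2) Q" "balanced_divisor c2 (\<epsilon>/2) P"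
  obtains X where "\<alpha> * real Q \<le> X" "2 \<le> spec_count \<alpha> X"
    "real (spec_count \<alpha> X) \<le> C0 * real Q powr (1 + \<epsilon>)"
    "delta_min \<alpha> (spec_count \<alpha> X) \<le> 16 * K / real Q"
proof -
  obtain s t where st: "s * t = Q" "1 \<le> s" "s \<le> t" and t: "real t ^ 2 \<le> real Q powr (1 + \<epsilon>) / c1 ^ 2"
    using balanced_divisor_factorization[of c1 "\<epsilon>/2" Q] assms by auto
  obtain u v where uv: "u * v = P" "1 \<le> u" "u \<le> v" and v: "real v ^ 2 \<le> real P powr (1 + \<epsilon>) / c2 ^ 2"
    using balanced_divisor_factorization[of c2 "\<epsilon>/2" P] assms by auto
  obtain A B where AB: "A \<in> spec_set \<alpha>" "B \<in> spec_set \<alpha>" "A < B"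
    and diff: "B - A = 16 * \<bar>\<alpha> * real Q - real P\<bar>"
    and B: "\<alpha> * real Q \<le> B" "B \<le> 25 * (\<alpha> * real t ^ 2 + real v ^ 2)"
    using close_pair_in_spec_set[OF assms(2,3) st uv] .
  have "real P powr (1 + \<epsilon>) / c2 ^ 2 \<le> (\<alpha> + K) powr (1 + \<epsilon>) / c2 ^ 2 * real Q powr (1 + \<epsilon>)"
    using numerator_powr_le_of_approximation[OF assms(7,8) approx assms(4)] by (simp add: divide_right_mono)
  with v have v': "real v ^ 2 \<le> (\<alpha> + K) powr (1 + \<epsilon>) / c2 ^ 2 * real Q powr (1 + \<epsilon>)"
    by linarith
  have t': "\<alpha> * real t ^ 2 \<le> \<alpha> / c1 ^ 2 * real Q powr (1 + \<epsilon>)"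
    using mult_left_mono[OF t, of \<alpha>] assms(2) by simp
  have "B / sqrt \<alpha> \<le> 25 * (\<alpha> * real t ^ 2 + real v ^ 2) / sqrt \<alpha>"
    using B(2) assms(2) by (simp add: divide_right_mono)
  also have "\<dots> \<le> 25 * (\<alpha> / c1 ^ 2 * real Q powr (1 + \<epsilon>) + (\<alpha> + K) powr (1 + \<epsilon>) / c2 ^ 2 * real Q powr (1 + \<epsilon>)) / sqrt \<alpha>"
    using add_mono[OF t' v'] assms(2) by (simp add: divide_right_mono)
  also have "\<dots> = C0 * real Q powr (1 + \<epsilon>)"
    unfolding C0_def by (simp add: algebra_simps)
  finally have "B / sqrt \<alpha> \<le> C0 * real Q powr (1 + \<epsilon>)" .
  then have "real (spec_count \<alpha> B) \<le> C0 * real Q powr (1 + \<epsilon>)"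
    using spec_count_le[of \<alpha> B] assms(2) spec_set_nonneg[OF assms(2) AB(2)] by linarith
  moreover have "delta_min \<alpha> (spec_count \<alpha> B) \<le> 16 * K / real Q"
    using delta_min_spec_count_le(2)[OF assms(2) AB] diff approx by simp
  ultimately show ?thesis
    using that B(1) delta_min_spec_count_le(1)[OF assms(2) AB] by blast
qed

text \<open>The exponent loss is harmless since \<open>(1 + \<epsilon>) (1 - \<epsilon>) \<le> 1\<close>.\<close>
lemma inverse_le_powr_of_le_powr:
  fixes Q N C0 \<epsilon> :: real
  assumes "0 \<le> \<epsilon>" "\<epsilon> \<le> 1" "1 \<le> Q" "1 \<le> N" "C0 > 0" "N \<le> C0 * Q powr (1 + \<epsilon>)"
  shows "1 / Q \<le> C0 powr (1 - \<epsilon>) * N powr (-1 + \<epsilon>)"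
proof -
  have "N powr (1 - \<epsilon>) \<le> (C0 * Q powr (1 + \<epsilon>)) powr (1 - \<epsilon>)"
    using assms by (intro powr_mono2) auto
  also have "\<dots> = C0 powr (1 - \<epsilon>) * Q powr ((1 + \<epsilon>) * (1 - \<epsilon>))"
    using assms by (simp add: powr_mult powr_powr)
  also have "\<dots> \<le> C0 powr (1 - \<epsilon>) * Q powr 1"
    using assms by (intro mult_left_mono powr_mono) (auto simp: algebra_simps)
  finally have "N powr (1 - \<epsilon>) \<le> C0 powr (1 - \<epsilon>) * Q"
    using assms by simp
  then have "N powr (1 - \<epsilon>) * N powr (-1 + \<epsilon>) \<le> C0 powr (1 - \<epsilon>) * Q * N powr (-1 + \<epsilon>)"
    by (rule mult_right_mono) simp
  then have "1 \<le> C0 powr (1 - \<epsilon>) * N powr (-1 + \<epsilon>) * Q"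
    using assms by (simp add: powr_add[symmetric] mult_ac)
  then show ?thesis
    using assms by (simp add: divide_le_eq)
qed

lemma powr_bound_of_eventual_powr_bound:
  fixes g :: "nat \<Rightarrow> real"
  assumes "\<forall>N\<ge>N0. g N \<le> C * real N powr (-1 + \<epsilon>)" "\<forall>N\<ge>2. g N \<le> B" "\<epsilon> \<le> 1" "C > 0"
  shows "\<exists>C'>0. \<forall>N\<ge>2. g N \<le> C' * real N powr (-1 + \<epsilon>)"
proof (intro exI conjI allI impI)
  define C' where "C' = C + \<bar>B\<bar> * real N0 powr (1 - \<epsilon>)"
  show "C' > 0" unfolding C'_def using assms(4) by (simp add: add_pos_nonneg)
  fix N :: nat assume "2 \<le> N"
  have "0 \<le> \<bar>B\<bar> * real N0 powr (1 - \<epsilon>) * real N powr (-1 + \<epsilon>)" by simp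
  then have C': "C * real N powr (-1 + \<epsilon>) \<le> C' * real N powr (-1 + \<epsilon>)"
    unfolding C'_def by (simp add: distrib_right)
  show "g N \<le> C' * real N powr (-1 + \<epsilon>)"
  proof (cases "N0 \<le> N")
    case True
    then show ?thesis using assms(1) C' by force
  next
    case False
    have "1 = real N powr (1 - \<epsilon>) * real N powr (-1 + \<epsilon>)"
      using \<open>2 \<le> N\<close> by (simp add: powr_add[symmetric])
    also have "\<dots> \<le> real N0 powr (1 - \<epsilon>) * real N powr (-1 + \<epsilon>)"
      using False \<open>2 \<le> N\<close> assms(3) by (intro mult_right_mono powr_mono2) auto
    finally have "\<bar>B\<bar> \<le> \<bar>B\<bar> * real N0 powr (1 - \<epsilon>) * real N powr (-1 + \<epsilon>)"
      using mult_left_mono[of 1 _ "\<bar>B\<bar>"] by (simp add: mult.assoc)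
    also have "\<dots> \<le> C' * real N powr (-1 + \<epsilon>)"
      unfolding C'_def using assms(4) by (simp add: distrib_right)
    finally show ?thesis using assms(2) \<open>2 \<le> N\<close> by force
  qed
qed

lemma bracketing_index:
  fixes f :: "nat \<Rightarrow> real"
  assumes "f 1 \<le> x" "x < f k" "1 \<le> k"
  obtains n where "1 \<le> n" "f n \<le> x" "x < f (Suc n)"
  using assms(3,2)
proof (induction k rule: nat_induct_at_least)
  case base
  then show ?case using assms(1) by simp
next
  case (Suc k)
  show ?case
  proof (cases "x < f k")
    case True
    then show ?thesis using Suc.IH Suc.prems(1) by blast
  next
    case False
    then show ?thesis using Suc.prems Suc.hyps by simp
  qed
qed

lemma mult_powr_exponent_mono:
  assumes "\<epsilon>' \<le> \<epsilon>" "0 \<le> C"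
  shows "C * real N powr (-1 + \<epsilon>') \<le> C * real N powr (-1 + \<epsilon>)"
  using assms by (cases "N = 0") (auto intro!: mult_left_mono powr_mono)

locale good_rational_approximations =
  fixes \<alpha> K :: real and p q :: "nat \<Rightarrow> nat"
  assumes alpha_pos: "\<alpha> > 0" and alpha_irrational: "\<alpha> \<notin> \<rat>"
    and positive: "\<forall>n\<ge>1. p n > 0 \<and> q n > 0"
    and q_increasing: "\<forall>n\<ge>1. q n < q (n + 1)"
    and K_pos: "K > 0"
    and approximation: "\<forall>n\<ge>1. \<bar>\<alpha> * real (q n) - real (p n)\<bar> \<le> K / real (q n)"

locale balanced_approximations = good_rational_approximations +
  fixes \<epsilon> c1 c2 :: real
  assumes eps_nonneg: "0 \<le> \<epsilon>" and eps_le_1: "\<epsilon> \<le> 1" and c1_pos: "c1 > 0" and c2_pos: "c2 > 0"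
    and q_balanced: "\<forall>n\<ge>1. balanced_divisor c1 (\<epsilon>/2) (q n)"
    and p_balanced: "\<forall>n\<ge>1. balanced_divisor c2 (\<epsilon>/2) (p n)"

context good_rational_approximations
begin

lemma index_le_q: "1 \<le> n \<Longrightarrow> n \<le> q n"
proof (induction n rule: nat_induct_at_least)
  case base
  then show ?case using positive by (simp add: Suc_le_eq)
next
  case (Suc n)
  then show ?case using q_increasing by (metis Suc_eq_plus1 Suc_le_eq le_less_trans)
qed

lemma balanced_approximations_if_evenly_divisible:
  assumes "evenly_divisible p" "evenly_divisible q" "0 < \<epsilon>" "\<epsilon> \<le> 1"
  obtains c1 c2 where "balanced_approximations \<alpha> K p q \<epsilon> c1 c2"
proof -
  have "\<epsilon>/2 > 0" using assms(3) by simp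
  then obtain c1 c2 where "c1 > 0" "\<forall>n\<ge>1. balanced_divisor c1 (\<epsilon>/2) (q n)"
    "c2 > 0" "\<forall>n\<ge>1. balanced_divisor c2 (\<epsilon>/2) (p n)"
    using assms(1,2) unfolding evenly_divisible_iff_balanced_divisor by blast
  then have "balanced_approximations \<alpha> K p q \<epsilon> c1 c2"
    using assms(3,4)
    by (intro balanced_approximations.intro balanced_approximations_axioms.intro
        good_rational_approximations_axioms) auto
  then show ?thesis using that by blast
qed

lemma balanced_approximations_if_strongly_evenly_divisible:
  assumes "strongly_evenly_divisible p" "strongly_evenly_divisible q"
  obtains c1 c2 where "balanced_approximations \<alpha> K p q 0 c1 c2"
proof -
  obtain c1 c2 where "c1 > 0" "\<forall>n\<ge>1. balanced_divisor c1 0 (q n)"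
    "c2 > 0" "\<forall>n\<ge>1. balanced_divisor c2 0 (p n)"
    using assms unfolding strongly_evenly_divisible_iff_balanced_divisor by blast
  then have "balanced_approximations \<alpha> K p q 0 c1 c2"
    by (intro balanced_approximations.intro balanced_approximations_axioms.intro
        good_rational_approximations_axioms) auto
  then show ?thesis using that by blast
qed

end

context balanced_approximations
begin

lemma small_gaps:
  "\<exists>C0>0. \<forall>n\<ge>1. \<exists>X. \<alpha> * real (q n) \<le> X \<and> 2 \<le> spec_count \<alpha> X
     \<and> real (spec_count \<alpha> X) \<le> C0 * real (q n) powr (1 + \<epsilon>)
     \<and> delta_min \<alpha> (spec_count \<alpha> X) \<le> 16 * K / real (q n)"
proof -
  define C0 where "C0 = 25 * (\<alpha> / c1 ^ 2 + (\<alpha> + K) powr (1 + \<epsilon>) / c2 ^ 2) / sqrt \<alpha>"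
  have "C0 > 0" unfolding C0_def using alpha_pos K_pos c1_pos c2_pos by (simp add: add_pos_pos)
  moreover have "\<exists>X. \<alpha> * real (q n) \<le> X \<and> 2 \<le> spec_count \<alpha> X
     \<and> real (spec_count \<alpha> X) \<le> C0 * real (q n) powr (1 + \<epsilon>)
     \<and> delta_min \<alpha> (spec_count \<alpha> X) \<le> 16 * K / real (q n)" if n: "1 \<le> n" for n
  proof -
    have "p n > 0" "q n > 0" "\<bar>\<alpha> * real (q n) - real (p n)\<bar> \<le> K / real (q n)"
      "balanced_divisor c1 (\<epsilon>/2) (q n)" "balanced_divisor c2 (\<epsilon>/2) (p n)"
      using n positive approximation q_balanced p_balanced by auto
    from small_gap_of_approximation[OF alpha_pos alpha_irrational eps_nonneg c1_pos c2_pos this]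
    show ?thesis unfolding C0_def by blast
  qed
  ultimately show ?thesis by blast
qed

lemma delta_min_le_of_small_gap:
  assumes "real N \<le> C0 * real (q n) powr (1 + \<epsilon>)" "delta_min \<alpha> M \<le> 16 * K / real (q n)"
    "C0 > 0" "1 \<le> n" "1 \<le> N"
  shows "delta_min \<alpha> M \<le> 16 * K * C0 powr (1 - \<epsilon>) * real N powr (-1 + \<epsilon>)"
proof -
  have "1 / real (q n) \<le> C0 powr (1 - \<epsilon>) * real N powr (-1 + \<epsilon>)"
    using assms index_le_q[of n] eps_nonneg eps_le_1
    by (intro inverse_le_powr_of_le_powr) auto
  then have "16 * K * (1 / real (q n)) \<le> 16 * K * (C0 powr (1 - \<epsilon>) * real N powr (-1 + \<epsilon>))"
    using K_pos by (intro mult_left_mono) auto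
  then show ?thesis using assms(2) by (simp add: mult.assoc)
qed

lemma frequently_delta_min_le:
  assumes "\<epsilon> \<le> \<epsilon>'"
  shows "\<exists>C>0. \<exists>\<^sub>\<infinity>N. delta_min \<alpha> N \<le> C * real N powr (-1 + \<epsilon>')"
proof -
  obtain C0 where "C0 > 0" and gaps: "\<forall>n\<ge>1. \<exists>X. \<alpha> * real (q n) \<le> X \<and> 2 \<le> spec_count \<alpha> X
     \<and> real (spec_count \<alpha> X) \<le> C0 * real (q n) powr (1 + \<epsilon>)
     \<and> delta_min \<alpha> (spec_count \<alpha> X) \<le> 16 * K / real (q n)"
    using small_gaps by blast
  have "\<exists>N\<ge>m. delta_min \<alpha> N \<le> 16 * K * C0 powr (1 - \<epsilon>) * real N powr (-1 + \<epsilon>')" for m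
  proof -
    define n where "n = 1 + nat \<lceil>real m ^ 2 / \<alpha>\<rceil>"
    have "1 \<le> n" unfolding n_def by simp
    have "real m ^ 2 / \<alpha> + 1 \<le> real (q n)"
      using index_le_q[OF \<open>1 \<le> n\<close>] unfolding n_def by linarith
    then have m: "\<alpha> + real m ^ 2 \<le> \<alpha> * real (q n)"
      using alpha_pos by (simp add: field_simps)
    obtain X where X: "\<alpha> * real (q n) \<le> X" "2 \<le> spec_count \<alpha> X"
      "real (spec_count \<alpha> X) \<le> C0 * real (q n) powr (1 + \<epsilon>)"
      "delta_min \<alpha> (spec_count \<alpha> X) \<le> 16 * K / real (q n)"
      using gaps \<open>1 \<le> n\<close> by blast
    have "m \<le> spec_count \<alpha> X"
      using spec_count_ge[OF alpha_pos] m X(1) by simp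
    moreover have "delta_min \<alpha> (spec_count \<alpha> X)
        \<le> 16 * K * C0 powr (1 - \<epsilon>) * real (spec_count \<alpha> X) powr (-1 + \<epsilon>)"
      using delta_min_le_of_small_gap[OF X(3,4) \<open>C0 > 0\<close> \<open>1 \<le> n\<close>] X(2) by simp
    moreover have "16 * K * C0 powr (1 - \<epsilon>) * real (spec_count \<alpha> X) powr (-1 + \<epsilon>)
        \<le> 16 * K * C0 powr (1 - \<epsilon>) * real (spec_count \<alpha> X) powr (-1 + \<epsilon>')"
      using mult_powr_exponent_mono[OF assms] K_pos by simp
    ultimately show ?thesis by (meson order_trans)
  qed
  then show ?thesis
    using \<open>C0 > 0\<close> K_pos unfolding cofinite_eq_sequentially frequently_sequentially
    by (intro exI[of _ "16 * K * C0 powr (1 - \<epsilon>)"]) auto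
qed

lemma index_le_q_powr: "1 \<le> k \<Longrightarrow> real k \<le> real (q k) powr (1 + \<epsilon>)"
  using index_le_q[of k] eps_nonneg powr_mono[of 1 "1 + \<epsilon>" "real (q k)"] by simp

lemma q_Suc_powr_le:
  assumes "c > 0" "\<forall>n\<ge>1. real (q n) \<ge> c * real (q (n + 1))" "1 \<le> n"
  shows "c powr (1 + \<epsilon>) * real (q (Suc n)) powr (1 + \<epsilon>) \<le> real (q n) powr (1 + \<epsilon>)"
proof -
  have "(c * real (q (Suc n))) powr (1 + \<epsilon>) \<le> real (q n) powr (1 + \<epsilon>)"
    using assms eps_nonneg positive by (intro powr_mono2) auto
  then show ?thesis using assms(1) by (simp add: powr_mult)
qed

text \<open>Under \<open>q\<^sub>n \<ge> c q\<^sub>n\<^sub>+\<^sub>1\<close> the ranks \<open>C0 q\<^sub>n\<^sup>1\<^sup>+\<^sup>\<epsilon>\<close> at which small gaps are guaranteed grow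
  at most geometrically, so every large \<open>M\<close> lies above such a rank at a comparable scale.\<close>
lemma eventually_delta_min_le_powr:
  assumes "c > 0" "\<forall>n\<ge>1. real (q n) \<ge> c * real (q (n + 1))"
  obtains N0 C where "C > 0" "\<forall>M\<ge>N0. delta_min \<alpha> M \<le> C * real M powr (-1 + \<epsilon>)"
proof -
  obtain C0 where "C0 > 0" and gaps: "\<forall>n\<ge>1. \<exists>X. \<alpha> * real (q n) \<le> X \<and> 2 \<le> spec_count \<alpha> X
     \<and> real (spec_count \<alpha> X) \<le> C0 * real (q n) powr (1 + \<epsilon>)
     \<and> delta_min \<alpha> (spec_count \<alpha> X) \<le> 16 * K / real (q n)"
    using small_gaps by blast
  define f where "f n = C0 * real (q n) powr (1 + \<epsilon>)" for n
  define C0' where "C0' = C0 / c powr (1 + \<epsilon>)"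
  have "C0' > 0" unfolding C0'_def using \<open>C0 > 0\<close> assms(1) by simp
  have f_ge: "C0 * real k \<le> f k" if "1 \<le> k" for k
    unfolding f_def using index_le_q_powr[OF that] \<open>C0 > 0\<close> by simp
  have f_Suc: "f (Suc n) \<le> C0' * real (q n) powr (1 + \<epsilon>)" if "1 \<le> n" for n
    unfolding f_def C0'_def using q_Suc_powr_le[OF assms that] \<open>C0 > 0\<close> assms(1)
    by (simp add: field_simps)
  have "delta_min \<alpha> M \<le> 16 * K * C0' powr (1 - \<epsilon>) * real M powr (-1 + \<epsilon>)"
    if "nat \<lceil>f 1\<rceil> \<le> M" for M
  proof -
    let ?k = "nat \<lceil>real M / C0\<rceil> + 1"
    have "real M / C0 < real ?k" by linarith
    then have "real M < C0 * real ?k"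
      using \<open>C0 > 0\<close> by (simp add: divide_less_eq mult.commute)
    then have "real M < f ?k" using f_ge[of ?k] by linarith
    moreover have "f 1 \<le> real M" using that by linarith
    ultimately obtain n where n: "1 \<le> n" "f n \<le> real M" "real M < f (Suc n)"
      using bracketing_index by (metis le_add2)
    obtain X where X: "2 \<le> spec_count \<alpha> X" "real (spec_count \<alpha> X) \<le> f n"
      "delta_min \<alpha> (spec_count \<alpha> X) \<le> 16 * K / real (q n)"
      using gaps n(1) unfolding f_def by blast
    have "spec_count \<alpha> X \<le> M" using X(2) n(2) by linarith
    then have "delta_min \<alpha> M \<le> 16 * K / real (q n)"
      using delta_min_antimono[OF X(1)] X(3) by (meson order_trans)
    moreover have "real M \<le> C0' * real (q n) powr (1 + \<epsilon>)"
      using n(3) f_Suc[OF n(1)] by linarith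
    ultimately show ?thesis
      using delta_min_le_of_small_gap[OF _ _ \<open>C0' > 0\<close> n(1)] X(1) \<open>spec_count \<alpha> X \<le> M\<close> by simp
  qed
  then show ?thesis
    using that[of "16 * K * C0' powr (1 - \<epsilon>)" "nat \<lceil>f 1\<rceil>"] K_pos \<open>C0' > 0\<close> by simp
qed

lemma delta_min_le_powr:
  assumes "c > 0" "\<forall>n\<ge>1. real (q n) \<ge> c * real (q (n + 1))" "\<epsilon> \<le> \<epsilon>'"
  shows "\<exists>C>0. \<forall>N\<ge>2. delta_min \<alpha> N \<le> C * real N powr (-1 + \<epsilon>')"
proof -
  obtain N0 C where "C > 0" "\<forall>M\<ge>N0. delta_min \<alpha> M \<le> C * real M powr (-1 + \<epsilon>)"
    using eventually_delta_min_le_powr[OF assms(1,2)] .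
  moreover have "\<forall>N\<ge>2. delta_min \<alpha> N \<le> delta_min \<alpha> 2"
    using delta_min_antimono by simp
  ultimately have "\<exists>C>0. \<forall>N\<ge>2. delta_min \<alpha> N \<le> C * real N powr (-1 + \<epsilon>)"
    using powr_bound_of_eventual_powr_bound[OF _ _ eps_le_1] by blast
  then show ?thesis
    using mult_powr_exponent_mono[OF assms(3)] by (meson less_imp_le order_trans)
qed

end

theorem lemma3p1:
  fixes \<alpha> K :: real and p q :: "nat \<Rightarrow> nat"
  assumes "\<alpha> > 0" and "\<alpha> \<notin> \<rat>"
    and "\<forall>n\<ge>1. p n > 0 \<and> q n > 0"
    and "\<forall>n\<ge>1. q n < q (n + 1)"
    and "K > 0"
    and "\<forall>n\<ge>1. \<bar>\<alpha> * real (q n) - real (p n)\<bar> \<le> K / real (q n)"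
  shows
    "(evenly_divisible p \<and> evenly_divisible q \<longrightarrow>
        (\<forall>\<epsilon>>0. \<exists>C>0. \<exists>\<^sub>\<infinity>N. delta_min \<alpha> N \<le> C * real N powr (-1 + \<epsilon>)))
   \<and> (strongly_evenly_divisible p \<and> strongly_evenly_divisible q \<longrightarrow>
        (\<exists>C>0. \<exists>\<^sub>\<infinity>N. delta_min \<alpha> N \<le> C * real N powr (-1)))
   \<and> ((\<exists>c>0. \<forall>n\<ge>1. real (q n) \<ge> c * real (q (n + 1))) \<longrightarrow>
        (evenly_divisible p \<and> evenly_divisible q \<longrightarrow>
          (\<forall>\<epsilon>>0. \<exists>C>0. \<forall>N\<ge>2. delta_min \<alpha> N \<le> C * real N powr (-1 + \<epsilon>)))
      \<and> (strongly_evenly_divisible p \<and> strongly_evenly_divisible q \<longrightarrow>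
          (\<exists>C>0. \<forall>N\<ge>2. delta_min \<alpha> N \<le> C * real N powr (-1))))"
proof -
  interpret good_rational_approximations \<alpha> K p q
    using assms by unfold_locales
  have weak: "(\<exists>C>0. \<exists>\<^sub>\<infinity>N. delta_min \<alpha> N \<le> C * real N powr (-1 + \<epsilon>))
      \<and> (c > 0 \<and> (\<forall>n\<ge>1. real (q n) \<ge> c * real (q (n + 1))) \<longrightarrow>
         (\<exists>C>0. \<forall>N\<ge>2. delta_min \<alpha> N \<le> C * real N powr (-1 + \<epsilon>)))"
    if ev: "evenly_divisible p" "evenly_divisible q" "\<epsilon> > 0" for \<epsilon> c
  proof -
    obtain c1 c2 where bal: "balanced_approximations \<alpha> K p q (min \<epsilon> 1) c1 c2"
      by (rule balanced_approximations_if_evenly_divisible[OF ev(1,2), of "min \<epsilon> 1"]) (use ev(3) in auto)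
    show ?thesis
      using balanced_approximations.frequently_delta_min_le[OF bal, of \<epsilon>]
        balanced_approximations.delta_min_le_powr[OF bal, of c \<epsilon>] by auto
  qed
  have strong: "(\<exists>C>0. \<exists>\<^sub>\<infinity>N. delta_min \<alpha> N \<le> C * real N powr (-1))
      \<and> (c > 0 \<and> (\<forall>n\<ge>1. real (q n) \<ge> c * real (q (n + 1))) \<longrightarrow>
         (\<exists>C>0. \<forall>N\<ge>2. delta_min \<alpha> N \<le> C * real N powr (-1)))"
    if sev: "strongly_evenly_divisible p" "strongly_evenly_divisible q" for c
  proof -
    obtain c1 c2 where bal: "balanced_approximations \<alpha> K p q 0 c1 c2"
      using balanced_approximations_if_strongly_evenly_divisible[OF sev] .
    show ?thesis
      using balanced_approximations.frequently_delta_min_le[OF bal, of 0]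
        balanced_approximations.delta_min_le_powr[OF bal, of c 0] by auto
  qed
  show ?thesis using weak strong by blast
qed

end
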